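(* Let $P$ be the uniform distribution on $[0,1]$ and let $\beta=\{\frac14,\frac12\}$. For $n\in\mathbb{N}$ with $n\geq 6$, let $\alpha_n$ be a conditional optimal set of $n$-points for $P$ with respect to $\beta$, and let $k=\mathrm{card}(\alpha_n\cap[0,\frac14])$, $\ell=\mathrm{card}(\alpha_n\cap[\frac14,\frac12])$, $m=\mathrm{card}(\alpha_n\cap[\frac12,1])$. For $x\in\mathbb{N}$: if $n=4x+2$ then $(k,\ell,m)=(x+1,x+2,2x+1)$; if $n=4x+3$ then $(k,\ell,m)=(x+1,x+2,2x+2)$; if $n=4x+4$ then $(k,\ell,m)=(x+2,x+2,2x+2)$; if $n=4x+5$ then $(k,\ell,m)=(x+2,x+2,2x+3)$.
   Context: Conditional quantization on $\mathbb{R}$: for a Borel probability measure $P$ on $\mathbb{R}$ and a finite set $\beta\subset\mathbb{R}$ with $\mathrm{card}(\beta)=r$, for $n\geq r$ the $n$th conditional quantization error is $V_n=\inf\{\int\min_{a\in\alpha\cup\beta}(x-a)^2\,dP(x):\alpha\subset\mathbb{R},\ \mathrm{card}(\alpha)\leq n-r\}$. A set $\alpha\cup\beta$ attaining this infimum, such that $P(M(b\mid\alpha\cup\beta))>0$ for every $b\in\beta$ (where $M(b\mid\Gamma)=\{x:|x-b|=\min_{c\in\Gamma}|x-c|\}$ is the Voronoi region of $b$), is called a conditional optimal set of $n$-points for $P$ with respect to $\beta$; it contains $\beta$. *)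

theory Defs
  imports "HOL-Analysis.Analysis"
begin

definition unif01 :: "real measure" where
  "unif01 = uniform_measure lborel {0..1}"

definition distortion :: "real measure \<Rightarrow> real set \<Rightarrow> real" where
  "distortion P \<Gamma> = (\<integral>x. Min ((\<lambda>a. (x - a)^2) ` \<Gamma>) \<partial>P)"

definition voronoi :: "real \<Rightarrow> real set \<Rightarrow> real set" where
  "voronoi b \<Gamma> = {x. \<bar>x - b\<bar> = Min ((\<lambda>c. \<bar>x - c\<bar>) ` \<Gamma>)}"

definition cond_qerror :: "real measure \<Rightarrow> real set \<Rightarrow> nat \<Rightarrow> real" where
  "cond_qerror P \<beta> n =
     Inf {distortion P (\<alpha> \<union> \<beta>) | \<alpha>. finite \<alpha> \<and> card \<alpha> \<le> n - card \<beta>}"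

definition cond_optimal_set :: "real measure \<Rightarrow> real set \<Rightarrow> nat \<Rightarrow> real set \<Rightarrow> bool" where
  "cond_optimal_set P \<beta> n \<Gamma> \<longleftrightarrow>
     (\<exists>\<alpha>. finite \<alpha> \<and> card \<alpha> \<le> n - card \<beta> \<and> \<Gamma> = \<alpha> \<union> \<beta>) \<and>
     distortion P \<Gamma> = cond_qerror P \<beta> n \<and>
     (\<forall>b\<in>\<beta>. measure P (voronoi b \<Gamma>) > 0)"

end

theory Submission
  imports Defs
begin

(* With the fixed points 1/4 and 1/2 the quantization error splits over the blocks [0,1/4],
   [1/4,1/2] and [1/2,1]. If the points of a block of length L cut it into N "half-cells"
   (an inner block with j points has N = 2(j - 1), an end block with k points, the last one at
   the fixed point, has N = 2k - 1), the error on the block is at least L^3/(3 N^2), by convexity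
   of u^3/s^2 in (u, s), with equality for equally spaced points. Points outside [0,1] only help
   as one extra point of an end block. Hence 192 times the conditional quantization error is the
   minimum of the separable convex function
     cost k l m = 1/(2k-1)^2 + 1/(2l-2)^2 + 8/(2m-1)^2   subject to k + l + m <= n + 2,
   and a Lagrange multiplier separating the forward differences of the three summands shows that
   the claimed triples are its unique minimizers. *)

section \<open>Squared distance to a finite set\<close>

definition min_sqdist :: "real set \<Rightarrow> real \<Rightarrow> real" where
  "min_sqdist G x = Min ((\<lambda>a. (x - a)^2) ` G)"

lemma min_sqdist_le: "finite G \<Longrightarrow> a \<in> G \<Longrightarrow> min_sqdist G x \<le> (x - a)^2"
  unfolding min_sqdist_def by (rule Min_le) auto

lemma min_sqdist_nearest:
  assumes "finite G" "p \<in> G" "\<And>q. q \<in> G \<Longrightarrow> \<bar>x - p\<bar> \<le> \<bar>x - q\<bar>"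
  shows "min_sqdist G x = (x - p)^2"
  unfolding min_sqdist_def using assms by (intro Min_eqI) (auto simp: abs_le_square_iff)

lemma min_sqdist_nonneg: "finite G \<Longrightarrow> G \<noteq> {} \<Longrightarrow> 0 \<le> min_sqdist G x"
  unfolding min_sqdist_def by (subst Min_ge_iff) auto

lemma min_sqdist_antimono: "finite H \<Longrightarrow> G \<noteq> {} \<Longrightarrow> G \<subseteq> H \<Longrightarrow> min_sqdist H x \<le> min_sqdist G x"
  unfolding min_sqdist_def by (rule Min_antimono) auto

lemma min_sqdist_reflect: "min_sqdist (uminus ` G) (- x) = min_sqdist G x"
proof -
  have "(- x - - a)^2 = (x - a)^2" for a :: real
    by (simp add: power2_eq_square algebra_simps)
  then show ?thesis unfolding min_sqdist_def image_image by simp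
qed

lemma continuous_on_min_sqdist: "finite G \<Longrightarrow> G \<noteq> {} \<Longrightarrow> continuous_on S (min_sqdist G)"
proof (induction G rule: finite_ne_induct)
  case (singleton a)
  then show ?case by (simp add: min_sqdist_def continuous_intros)
next
  case (insert a F)
  have "min_sqdist (insert a F) = (\<lambda>x. min ((x - a)^2) (min_sqdist F x))"
    using insert by (auto simp: min_sqdist_def fun_eq_iff)
  then show ?case using insert by (auto intro!: continuous_intros)
qed

lemma integrable_min_sqdist: "finite G \<Longrightarrow> G \<noteq> {} \<Longrightarrow> min_sqdist G integrable_on {a..b}"
  by (intro integrable_continuous_interval continuous_on_min_sqdist)

lemma integral_min_sqdist_combine:
  "finite G \<Longrightarrow> G \<noteq> {} \<Longrightarrow> a \<le> c \<Longrightarrow> c \<le> b \<Longrightarrow>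
   integral {a..c} (min_sqdist G) + integral {c..b} (min_sqdist G) = integral {a..b} (min_sqdist G)"
  by (intro Henstock_Kurzweil_Integration.integral_combine integrable_min_sqdist)

lemma integral_min_sqdist_reflect:
  "integral {-b..-a} (min_sqdist (uminus ` G)) = integral {a..b} (min_sqdist G)"
proof -
  have "min_sqdist (uminus ` G) = (\<lambda>x. min_sqdist G (- x))"
    by (metis min_sqdist_reflect minus_minus)
  then show ?thesis by (simp only: Henstock_Kurzweil_Integration.integral_reflect_real)
qed

lemma distortion_unif01:
  assumes "finite G" "G \<noteq> {}"
  shows "distortion unif01 G = integral {0..1} (min_sqdist G)"
proof -
  have cont: "continuous_on S (min_sqdist G)" for S
    using assms by (rule continuous_on_min_sqdist)
  have meas: "min_sqdist G \<in> borel_measurable lborel"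
    using borel_measurable_continuous_onI[OF cont] by simp
  have unif01: "unif01 = density lborel (\<lambda>x. ennreal (indicator {0..1::real} x))"
    unfolding unif01_def uniform_measure_def by (simp add: ennreal_indicator divide_ennreal_def)
  have "distortion unif01 G = (\<integral>x. min_sqdist G x \<partial>unif01)"
    unfolding distortion_def min_sqdist_def ..
  also have "\<dots> = (\<integral>x. indicator {0..1::real} x *\<^sub>R min_sqdist G x \<partial>lborel)"
    unfolding unif01 by (rule integral_density) (use meas in auto)
  also have "\<dots> = set_lebesgue_integral lborel {0..1} (min_sqdist G)"
    unfolding set_lebesgue_integral_def ..
  also have "\<dots> = integral {0..1} (min_sqdist G)"
    by (rule set_borel_integral_eq_integral(2)[OF borel_integrable_atLeastAtMost']) (rule cont)
  finally show ?thesis .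
qed

lemma integral_power2_diff:
  fixes p :: real
  assumes "a \<le> b"
  shows "integral {a..b} (\<lambda>x. (x - p)^2) = ((b - p)^3 - (a - p)^3) / 3"
proof -
  have "((\<lambda>x. (x - p)^2) has_integral ((b - p)^3/3 - (a - p)^3/3)) {a..b}"
    using assms by (intro fundamental_theorem_of_calculus)
      (auto intro!: derivative_eq_intros
        simp: has_real_derivative_iff_has_vector_derivative[symmetric] power2_eq_square)
  then show ?thesis by (simp add: integral_unique diff_divide_distrib)
qed

lemma integral_min_sqdist_le_point:
  assumes "finite G" "p \<in> G" "a \<le> b"
  shows "integral {a..b} (min_sqdist G) \<le> ((b - p)^3 - (a - p)^3) / 3"
proof -
  have "integral {a..b} (min_sqdist G) \<le> integral {a..b} (\<lambda>x. (x - p)^2)"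
    using assms by (intro integral_le integrable_min_sqdist min_sqdist_le
        integrable_continuous_interval continuous_intros) auto
  then show ?thesis using integral_power2_diff[OF assms(3)] by simp
qed

lemma integral_min_sqdist_nearest:
  assumes "finite G" "p \<in> G" "a \<le> b"
    and "\<And>x q. x \<in> {a..b} \<Longrightarrow> q \<in> G \<Longrightarrow> \<bar>x - p\<bar> \<le> \<bar>x - q\<bar>"
  shows "integral {a..b} (min_sqdist G) = ((b - p)^3 - (a - p)^3) / 3"
proof -
  have "integral {a..b} (min_sqdist G) = integral {a..b} (\<lambda>x. (x - p)^2)"
    using assms by (intro integral_cong min_sqdist_nearest) auto
  then show ?thesis using integral_power2_diff[OF assms(3)] by simp
qed

lemma integral_min_sqdist_cell_le:
  assumes "finite G" "c \<in> G" "e \<in> G" "c \<le> e"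
  shows "integral {c..e} (min_sqdist G) \<le> (e - c)^3 / 12"
proof -
  define h where "h = (c + e) / 2"
  have "integral {c..h} (min_sqdist G) \<le> ((h - c)^3 - (c - c)^3) / 3"
    using assms by (intro integral_min_sqdist_le_point) (auto simp: h_def)
  moreover have "integral {h..e} (min_sqdist G) \<le> ((e - e)^3 - (h - e)^3) / 3"
    using assms by (intro integral_min_sqdist_le_point) (auto simp: h_def)
  moreover have "integral {c..h} (min_sqdist G) + integral {h..e} (min_sqdist G) = integral {c..e} (min_sqdist G)"
    using assms by (intro integral_min_sqdist_combine) (auto simp: h_def)
  ultimately show ?thesis by (simp add: h_def field_simps power3_eq_cube)
qed

lemma integral_min_sqdist_cell:
  assumes "finite G" "c \<in> G" "e \<in> G" "c \<le> e" "G \<inter> {c<..<e} = {}"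
  shows "integral {c..e} (min_sqdist G) = (e - c)^3 / 12"
proof -
  define h where "h = (c + e) / 2"
  have outside: "q \<le> c \<or> e \<le> q" if "q \<in> G" for q
    using assms(5) that by fastforce
  have "integral {c..h} (min_sqdist G) = ((h - c)^3 - (c - c)^3) / 3"
  proof (rule integral_min_sqdist_nearest)
    show "\<bar>x - c\<bar> \<le> \<bar>x - q\<bar>" if "x \<in> {c..h}" "q \<in> G" for x q
      using that outside[of q] by (auto simp: h_def abs_if)
  qed (use assms in \<open>auto simp: h_def\<close>)
  moreover have "integral {h..e} (min_sqdist G) = ((e - e)^3 - (h - e)^3) / 3"
  proof (rule integral_min_sqdist_nearest)
    show "\<bar>x - e\<bar> \<le> \<bar>x - q\<bar>" if "x \<in> {h..e}" "q \<in> G" for x q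
      using that outside[of q] by (auto simp: h_def abs_if)
  qed (use assms in \<open>auto simp: h_def\<close>)
  moreover have "integral {c..h} (min_sqdist G) + integral {h..e} (min_sqdist G) = integral {c..e} (min_sqdist G)"
    using assms by (intro integral_min_sqdist_combine) (auto simp: h_def)
  ultimately show ?thesis by (simp add: h_def field_simps power3_eq_cube)
qed

section \<open>Quantization error on a block\<close>

(* (b - a)^3/3 * inner_cost j is the error on [a,b] of j equally spaced points including a and b,
   (b - a)^3/3 * end_cost k that of the k points a + h, a + 3h, ..., b, where (2k - 1) h = b - a.
   Note inner_cost 1 = 0, by division by zero. *)
definition inner_cost :: "nat \<Rightarrow> real" where
  "inner_cost j = 1 / (2 * real j - 2)^2"

definition end_cost :: "nat \<Rightarrow> real" where
  "end_cost k = 1 / (2 * real k - 1)^2"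

lemma inner_cost_scaled: "L^3 / 3 * inner_cost j = L^3 / (12 * (real j - 1)^2)"
proof -
  have "(2 * real j - 2)^2 = 4 * (real j - 1)^2" by (simp add: power2_eq_square algebra_simps)
  then show ?thesis by (simp add: inner_cost_def)
qed

lemma power3_div_power2_add_le:
  fixes u v s t :: real
  assumes "0 \<le> u" "0 \<le> v" "0 < s" "0 < t"
  shows "(u + v)^3 / (s + t)^2 \<le> u^3 / s^2 + v^3 / t^2"
proof -
  define w where "w = (u + v) / (s + t)"
  have w: "0 \<le> w" "u + v = w * (s + t)"
    using assms by (simp_all add: w_def)
  \<comment> \<open>tangent plane of the convex function y^3/r^2 along the ray y = w r\<close>
  have tangent: "3 * w^2 * y - 2 * w^3 * r \<le> y^3 / r^2" if "0 \<le> y" "0 < r" for y r :: real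
  proof -
    have "y^3 / r^2 - (3 * w^2 * y - 2 * w^3 * r) = (y - w * r)^2 * (y + 2 * w * r) / r^2"
      using that by (simp add: field_simps power2_eq_square power3_eq_cube)
    also have "\<dots> \<ge> 0" using that w by simp
    finally show ?thesis by simp
  qed
  have "(s + t)^2 \<noteq> 0" using assms by simp
  then have "(u + v)^3 / (s + t)^2 = w^3 * (s + t)"
    unfolding w(2) divide_eq_eq by (simp add: power_mult_distrib power2_eq_square power3_eq_cube)
  also have "\<dots> = 3 * w^2 * (u + v) - 2 * w^3 * (s + t)"
    unfolding w(2) by (simp add: power2_eq_square power3_eq_cube algebra_simps)
  also have "\<dots> \<le> u^3 / s^2 + v^3 / t^2"
    using tangent[of u s] tangent[of v t] assms by (simp add: algebra_simps)
  finally show ?thesis .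
qed

lemma integral_min_sqdist_split_ge:
  assumes "finite G" "G \<noteq> {}" "a \<le> c" "c \<le> b" "0 < s" "0 < t"
    and "(c - a)^3 / (12 * s^2) \<le> integral {a..c} (min_sqdist G)"
    and "(b - c)^3 / (12 * t^2) \<le> integral {c..b} (min_sqdist G)"
  shows "(b - a)^3 / (12 * (s + t)^2) \<le> integral {a..b} (min_sqdist G)"
proof -
  have "(b - a)^3 / (12 * (s + t)^2) = ((c - a) + (b - c))^3 / (s + t)^2 / 12"
    by simp
  also have "\<dots> \<le> ((c - a)^3 / s^2 + (b - c)^3 / t^2) / 12"
    using assms by (intro divide_right_mono power3_div_power2_add_le) auto
  also have "\<dots> \<le> integral {a..c} (min_sqdist G) + integral {c..b} (min_sqdist G)"
    using assms(7,8) by (simp add: add_divide_distrib)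
  also have "\<dots> = integral {a..b} (min_sqdist G)"
    using assms by (intro integral_min_sqdist_combine)
  finally show ?thesis .
qed

lemma integral_min_sqdist_ge_inner:
  assumes "finite G" "a \<in> G" "b \<in> G" "a \<le> b"
  shows "(b - a)^3 / 3 * inner_cost (card (G \<inter> {a..b})) \<le> integral {a..b} (min_sqdist G)"
  using assms(2-4)
proof (induction "card (G \<inter> {a..b})" arbitrary: a b rule: less_induct)
  case less
  have G: "G \<noteq> {}" using less.prems by auto
  show ?case
  proof (cases "G \<inter> {a<..<b} = {}")
    case True
    show ?thesis
    proof (cases "a = b")
      case False
      then have "G \<inter> {a..b} = {a, b}" using True less.prems by fastforce
      then show ?thesis unfolding inner_cost_scaled
        using False less.prems integral_min_sqdist_cell[OF assms(1) less.prems(1,2,3) True]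
        by simp
    qed simp
  next
    case False
    then obtain e where e: "e \<in> G" "a < e" "e < b" by auto
    define j where "j = card (G \<inter> {a..b})"
    define j1 where "j1 = card (G \<inter> {a..e})"
    define j2 where "j2 = card (G \<inter> {e..b})"
    have "(G \<inter> {a..e}) \<union> (G \<inter> {e..b}) = G \<inter> {a..b}" "(G \<inter> {a..e}) \<inter> (G \<inter> {e..b}) = {e}"
      using e by auto
    then have j: "j1 + j2 = j + 1"
      using card_Un_Int[of "G \<inter> {a..e}" "G \<inter> {e..b}"] assms(1) by (simp add: j_def j1_def j2_def)
    have "card {a, e} \<le> j1" "card {e, b} \<le> j2"
      unfolding j1_def j2_def using assms(1) less.prems e by (intro card_mono; auto)+
    then have j12: "2 \<le> j1" "2 \<le> j2" using e by auto
    have IH1: "(e - a)^3 / (12 * (real j1 - 1)^2) \<le> integral {a..e} (min_sqdist G)"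
      using less.hyps[of a e, unfolded inner_cost_scaled] j j12 less.prems e by (simp add: j_def j1_def)
    have IH2: "(b - e)^3 / (12 * (real j2 - 1)^2) \<le> integral {e..b} (min_sqdist G)"
      using less.hyps[of e b, unfolded inner_cost_scaled] j j12 less.prems e by (simp add: j_def j2_def)
    have "(b - a)^3 / (12 * ((real j1 - 1) + (real j2 - 1))^2) \<le> integral {a..b} (min_sqdist G)"
      using e j12 G assms(1) by (intro integral_min_sqdist_split_ge[OF _ _ _ _ _ _ IH1 IH2]) auto
    moreover have "(real j1 - 1) + (real j2 - 1) = real j - 1"
      using j by (simp add: algebra_simps flip: of_nat_add)
    ultimately show ?thesis unfolding inner_cost_scaled by (simp add: j_def)
  qed
qed

lemma integral_min_sqdist_leftmost:
  assumes "finite G" "p \<in> G" "a \<le> p" "\<And>q. q \<in> G \<Longrightarrow> p \<le> q"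
  shows "integral {a..p} (min_sqdist G) = (p - a)^3 / 3"
proof -
  have "integral {a..p} (min_sqdist G) = ((p - p)^3 - (a - p)^3) / 3"
  proof (rule integral_min_sqdist_nearest)
    show "\<bar>x - p\<bar> \<le> \<bar>x - q\<bar>" if "x \<in> {a..p}" "q \<in> G" for x q
      using that assms(4)[OF that(2)] by (auto simp: abs_if)
  qed (use assms in auto)
  moreover have "(a - p)^3 = - ((p - a)^3)" by (simp add: power3_eq_cube algebra_simps)
  ultimately show ?thesis by simp
qed

lemma integral_min_sqdist_ge_end:
  assumes "finite G" "b \<in> G" "a \<le> b" "G \<inter> {..<a} = {}"
  shows "(b - a)^3 / 3 * end_cost (card (G \<inter> {a..b})) \<le> integral {a..b} (min_sqdist G)"
proof -
  define S where "S = G \<inter> {a..b}"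
  define p where "p = Min S"
  have S: "finite S" "b \<in> S" using assms by (auto simp: S_def)
  then have "p \<in> S" "p \<le> b" unfolding p_def by (auto intro: Min_in)
  then have p: "p \<in> G" "a \<le> p" "p \<le> b" by (auto simp: S_def)
  have p_least: "p \<le> q" if "q \<in> G" for q
  proof (cases "q \<le> b")
    case True
    then have "q \<in> S" using assms(4) that by (force simp: S_def)
    then show ?thesis using S(1) by (simp add: p_def)
  qed (use p in auto)
  have S_eq: "G \<inter> {p..b} = S"
  proof
    show "G \<inter> {p..b} \<subseteq> S" using p(2) by (auto simp: S_def)
    show "S \<subseteq> G \<inter> {p..b}" using p_least by (auto simp: S_def)
  qed
  have first: "(p - a)^3 / (12 * (1/2)^2) \<le> integral {a..p} (min_sqdist G)"
    using integral_min_sqdist_leftmost[OF assms(1) p(1,2) p_least] by (simp add: power2_eq_square)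
  show ?thesis
  proof (cases "p = b")
    case True
    then have "S = {b}" using S(2) p_least S_eq by auto
    then show ?thesis using first True by (simp add: S_def[symmetric] end_cost_def power2_eq_square)
  next
    case False
    have "card {p, b} \<le> card S" using S \<open>p \<in> S\<close> by (intro card_mono) auto
    then have two: "2 \<le> card S" using False by simp
    have "(b - p)^3 / (12 * (real (card S) - 1)^2) \<le> integral {p..b} (min_sqdist G)"
      using integral_min_sqdist_ge_inner[OF assms(1) p(1) assms(2) p(3), unfolded inner_cost_scaled] S_eq
      by simp
    then have "(b - a)^3 / (12 * (1/2 + (real (card S) - 1))^2) \<le> integral {a..b} (min_sqdist G)"
      using assms(1) p two by (intro integral_min_sqdist_split_ge[OF _ _ _ _ _ _ first]) auto
    moreover have "12 * (1/2 + (real (card S) - 1))^2 = 3 * (2 * real (card S) - 1)^2"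
      by (simp add: power2_eq_square algebra_simps)
    ultimately have "(b - a)^3 / (3 * (2 * real (card S) - 1)^2) \<le> integral {a..b} (min_sqdist G)"
      by (simp only:)
    then show ?thesis by (simp add: S_def end_cost_def)
  qed
qed

(* Adding the point a does not increase the error and makes [a,b] an inner block with at most
   k + 1 points. *)
lemma integral_min_sqdist_gt_end:
  assumes "finite G" "b \<in> G" "a < b"
  shows "(b - a)^3 / 3 * end_cost (card (G \<inter> {a..b}) + 1) < integral {a..b} (min_sqdist G)"
proof -
  define k where "k = card (G \<inter> {a..b})"
  define j where "j = card (insert a G \<inter> {a..b})"
  have "insert a G \<inter> {a..b} = insert a (G \<inter> {a..b})" using assms by auto
  then have "j \<le> k + 1" using assms(1) by (simp add: j_def k_def card_insert_if)
  moreover have "card {a, b} \<le> j" unfolding j_def using assms by (intro card_mono) auto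
  ultimately have j: "2 \<le> j" "real j - 1 \<le> real k" using assms by auto
  have "(b - a)^3 / 3 * end_cost (k + 1) = (b - a)^3 / (3 * (2 * real k + 1)^2)"
    by (simp add: end_cost_def algebra_simps)
  also have "\<dots> < (b - a)^3 / (12 * (real j - 1)^2)"
  proof (rule divide_strict_left_mono)
    have "12 * (real j - 1)^2 \<le> 12 * (real k)^2"
      using j by (intro mult_left_mono power_mono) auto
    also have "\<dots> < 3 * (2 * real k + 1)^2"
      by (simp add: power2_eq_square algebra_simps)
    finally show "12 * (real j - 1)^2 < 3 * (2 * real k + 1)^2" .
  qed (use assms j in auto)
  also have "\<dots> \<le> integral {a..b} (min_sqdist (insert a G))"
    using integral_min_sqdist_ge_inner[of "insert a G" a b, unfolded inner_cost_scaled] assms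
    by (simp add: j_def)
  also have "\<dots> \<le> integral {a..b} (min_sqdist G)"
    using assms by (intro integral_le integrable_min_sqdist min_sqdist_antimono) auto
  finally show ?thesis by (simp add: k_def)
qed

lemma card_uminus_Int_atLeastAtMost:
  fixes G :: "real set"
  shows "card (uminus ` G \<inter> {-b..-a}) = card (G \<inter> {a..b})"
proof -
  have "uminus ` G \<inter> {-b..-a} = uminus ` (G \<inter> {a..b})" by force
  then show ?thesis by (simp add: card_image)
qed

lemma integral_min_sqdist_ge_end_right:
  assumes "finite G" "a \<in> G" "a \<le> b" "G \<inter> {b<..} = {}"
  shows "(b - a)^3 / 3 * end_cost (card (G \<inter> {a..b})) \<le> integral {a..b} (min_sqdist G)"
proof -
  have "uminus ` G \<inter> {..<-b} = {}" using assms(4) by force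
  then show ?thesis
    using integral_min_sqdist_ge_end[of "uminus ` G" "-a" "-b"] assms
    by (simp add: card_uminus_Int_atLeastAtMost integral_min_sqdist_reflect)
qed

lemma integral_min_sqdist_gt_end_right:
  assumes "finite G" "a \<in> G" "a < b"
  shows "(b - a)^3 / 3 * end_cost (card (G \<inter> {a..b}) + 1) < integral {a..b} (min_sqdist G)"
  using integral_min_sqdist_gt_end[of "uminus ` G" "-a" "-b"] assms
  by (simp add: card_uminus_Int_atLeastAtMost integral_min_sqdist_reflect)

lemma integral_min_sqdist_grid_le:
  assumes "finite G" "0 \<le> h" "\<And>i. i \<le> j \<Longrightarrow> a + real i * h \<in> G"
  shows "integral {a..a + real j * h} (min_sqdist G) \<le> real j * h^3 / 12"
  using assms(3)
proof (induction j)
  case (Suc j)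
  have G: "G \<noteq> {}" using Suc.prems by blast
  have "a + real j * h \<in> G" "a + real (Suc j) * h \<in> G"
    using Suc.prems[of j] Suc.prems[of "Suc j"] by auto
  moreover have step: "a + real j * h \<le> a + real (Suc j) * h"
    using assms(2) by (intro add_left_mono mult_right_mono) auto
  ultimately have "integral {a + real j * h..a + real (Suc j) * h} (min_sqdist G)
      \<le> ((a + real (Suc j) * h) - (a + real j * h))^3 / 12"
    using assms(1) by (intro integral_min_sqdist_cell_le)
  then have "integral {a + real j * h..a + real (Suc j) * h} (min_sqdist G) \<le> h^3 / 12"
    by (simp add: algebra_simps)
  moreover have "integral {a..a + real j * h} (min_sqdist G) \<le> real j * h^3 / 12"
    using Suc by simp
  moreover have "integral {a..a + real j * h} (min_sqdist G) + integral {a + real j * h..a + real (Suc j) * h} (min_sqdist G)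
      = integral {a..a + real (Suc j) * h} (min_sqdist G)"
    using assms(1,2) G step by (intro integral_min_sqdist_combine) auto
  ultimately show ?case by (simp add: algebra_simps add_divide_distrib)
qed simp

lemma integral_min_sqdist_le_inner_grid:
  assumes "finite G" "0 \<le> h" "2 \<le> j" "b = a + (real j - 1) * h"
    and "\<And>i. i < j \<Longrightarrow> a + real i * h \<in> G"
  shows "integral {a..b} (min_sqdist G) \<le> (b - a)^3 / 3 * inner_cost j"
proof -
  have j: "real (j - 1) = real j - 1" "0 < real j - 1" using assms(3) by auto
  have "integral {a..a + real (j - 1) * h} (min_sqdist G) \<le> real (j - 1) * h^3 / 12"
    using assms(1,2,3,5) by (intro integral_min_sqdist_grid_le) auto
  then have grid: "integral {a..b} (min_sqdist G) \<le> real (j - 1) * h^3 / 12"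
    using assms(4) j(1) by simp
  have cancel: "(D * h)^3 / (12 * D^2) = D * h^3 / 12" if "D \<noteq> 0" for D :: real
    using that by (simp add: power_mult_distrib power2_eq_square power3_eq_cube)
  have "(b - a)^3 / 3 * inner_cost j = ((real j - 1) * h)^3 / (12 * (real j - 1)^2)"
    unfolding inner_cost_scaled assms(4) by simp
  also have "\<dots> = real (j - 1) * h^3 / 12"
    unfolding j(1) using j(2) by (intro cancel) simp
  finally show ?thesis using grid by linarith
qed

lemma integral_min_sqdist_le_end_grid:
  assumes "finite G" "0 \<le> h" "1 \<le> k" "b = a + (2 * real k - 1) * h"
    and "\<And>i. i < k \<Longrightarrow> a + (2 * real i + 1) * h \<in> G"
  shows "integral {a..b} (min_sqdist G) \<le> (b - a)^3 / 3 * end_cost k"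
proof -
  have k: "real (k - 1) = real k - 1" "0 < 2 * real k - 1" using assms(3) by auto
  have b: "b = (a + h) + real (k - 1) * (2 * h)" unfolding assms(4) k(1) by (simp add: algebra_simps)
  have G: "a + h \<in> G" using assms(3) assms(5)[of 0] by simp
  have "integral {a..a + h} (min_sqdist G) \<le> ((a + h - (a + h))^3 - (a - (a + h))^3) / 3"
    using assms(1,2) G by (intro integral_min_sqdist_le_point) auto
  moreover have "(a + h) + real i * (2 * h) \<in> G" if "i \<le> k - 1" for i
  proof -
    have "i < k" using assms(3) that by simp
    then have "a + (2 * real i + 1) * h \<in> G" by (rule assms(5))
    moreover have "(a + h) + real i * (2 * h) = a + (2 * real i + 1) * h" by (simp add: algebra_simps)
    ultimately show ?thesis by (simp only:)
  qed
  then have "integral {a + h..b} (min_sqdist G) \<le> real (k - 1) * (2 * h)^3 / 12"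
    unfolding b using assms(1,2) by (intro integral_min_sqdist_grid_le) auto
  moreover have "integral {a..a + h} (min_sqdist G) + integral {a + h..b} (min_sqdist G)
      = integral {a..b} (min_sqdist G)"
    using assms(1,2) G b by (intro integral_min_sqdist_combine) auto
  moreover have "(b - a)^3 / 3 * end_cost k = h^3 / 3 + real (k - 1) * (2 * h)^3 / 12"
  proof -
    have identity: "(D * h)^3 / 3 * (1 / D^2) = h^3 / 3 + (D - 1) / 2 * (2 * h)^3 / 12"
      if "D \<noteq> 0" for D :: real
      using that by (simp add: field_simps power2_eq_square power3_eq_cube)
    have "real (k - 1) = ((2 * real k - 1) - 1) / 2" using k(1) by simp
    then show ?thesis unfolding assms(4) end_cost_def add_diff_cancel_left'
      by (rule ssubst) (rule identity, use k(2) in simp)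
  qed
  ultimately show ?thesis by (simp add: power3_eq_cube)
qed

lemma integral_min_sqdist_le_end_grid_right:
  assumes "finite G" "0 \<le> h" "1 \<le> k" "b = a + (2 * real k - 1) * h"
    and "\<And>i. i < k \<Longrightarrow> b - (2 * real i + 1) * h \<in> G"
  shows "integral {a..b} (min_sqdist G) \<le> (b - a)^3 / 3 * end_cost k"
proof -
  have "- b + (2 * real i + 1) * h \<in> uminus ` G" if "i < k" for i
    using assms(5)[OF that] by force
  then have "integral {-b..-a} (min_sqdist (uminus ` G)) \<le> (- a - - b)^3 / 3 * end_cost k"
    using assms by (intro integral_min_sqdist_le_end_grid[of _ h k]) auto
  then show ?thesis by (simp add: integral_min_sqdist_reflect)
qed

section \<open>Separable discrete convex minimization\<close>

definition fdiff :: "(nat \<Rightarrow> real) \<Rightarrow> nat \<Rightarrow> real" where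
  "fdiff \<phi> j = \<phi> (Suc j) - \<phi> j"

lemma fdiff_telescope: "\<phi> (i + t) - \<phi> i = (\<Sum>s<t. fdiff \<phi> (i + s))"
  by (induction t) (simp_all add: fdiff_def)

lemma fdiff_mono_from:
  assumes "\<And>j. d \<le> j \<Longrightarrow> fdiff \<phi> j \<le> fdiff \<phi> (Suc j)" "d \<le> i" "i \<le> j"
  shows "fdiff \<phi> i \<le> fdiff \<phi> j"
  using assms(3)
proof (induction j rule: dec_induct)
  case (step j)
  then show ?case using assms(1)[of j] assms(2) by linarith
qed simp

lemma fdiff_supporting_line:
  assumes convex: "\<And>j. d \<le> j \<Longrightarrow> fdiff \<phi> j \<le> fdiff \<phi> (Suc j)"
    and "d < a" "d \<le> y" "y \<noteq> a"
    and "fdiff \<phi> (a - 1) < lam" "lam < fdiff \<phi> a"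
  shows "lam * (real y - real a) < \<phi> y - \<phi> a"
proof (cases "a < y")
  case True
  define t where "t = y - a"
  have "real t * lam < real t * fdiff \<phi> a"
    using True assms(6) by (simp add: t_def)
  also have "\<dots> \<le> (\<Sum>s<t. fdiff \<phi> (a + s))"
    using sum_bounded_below[of "{..<t}" "fdiff \<phi> a" "\<lambda>s. fdiff \<phi> (a + s)"]
      fdiff_mono_from[OF convex] assms(2) by simp
  also have "\<dots> = \<phi> y - \<phi> a"
    using True fdiff_telescope[of \<phi> a t] by (simp add: t_def)
  finally show ?thesis using True by (simp add: t_def of_nat_diff algebra_simps)
next
  case False
  define t where "t = a - y"
  have "\<phi> a - \<phi> y = (\<Sum>s<t. fdiff \<phi> (y + s))"
    using False fdiff_telescope[of \<phi> y t] by (simp add: t_def)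
  also have "\<dots> \<le> real t * fdiff \<phi> (a - 1)"
    using sum_bounded_above[of "{..<t}" "\<lambda>s. fdiff \<phi> (y + s)" "fdiff \<phi> (a - 1)"]
      fdiff_mono_from[OF convex] assms(3) by (simp add: t_def)
  also have "\<dots> < real t * lam"
    using False assms(4,5) by (simp add: t_def)
  finally show ?thesis using False by (simp add: t_def of_nat_diff algebra_simps)
qed

(* The Lagrange multiplier argument: each \<phi> i lies above the line of slope lam through a i,
   strictly away from a i. *)
lemma separable_convex_unique_min:
  fixes \<phi> :: "'i \<Rightarrow> nat \<Rightarrow> real" and a d y :: "'i \<Rightarrow> nat"
  assumes "finite I"
    and convex: "\<And>i j. i \<in> I \<Longrightarrow> d i \<le> j \<Longrightarrow> fdiff (\<phi> i) j \<le> fdiff (\<phi> i) (Suc j)"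
    and "\<And>i. i \<in> I \<Longrightarrow> d i < a i" "\<And>i. i \<in> I \<Longrightarrow> d i \<le> y i"
    and "lam \<le> 0"
    and "\<And>i. i \<in> I \<Longrightarrow> fdiff (\<phi> i) (a i - 1) < lam" "\<And>i. i \<in> I \<Longrightarrow> lam < fdiff (\<phi> i) (a i)"
    and "(\<Sum>i\<in>I. y i) \<le> (\<Sum>i\<in>I. a i)" "(\<Sum>i\<in>I. \<phi> i (y i)) \<le> (\<Sum>i\<in>I. \<phi> i (a i))"
  shows "\<forall>i\<in>I. y i = a i"
proof (rule ccontr)
  assume "\<not> (\<forall>i\<in>I. y i = a i)"
  then obtain i0 where i0: "i0 \<in> I" "y i0 \<noteq> a i0" by blast
  have "(\<Sum>i\<in>I. real (y i) - real (a i)) \<le> 0"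
    using assms(8) by (simp add: sum_subtractf flip: of_nat_sum)
  then have "0 \<le> lam * (\<Sum>i\<in>I. real (y i) - real (a i))"
    using assms(5) by (simp add: mult_nonpos_nonpos)
  also have "\<dots> = (\<Sum>i\<in>I. lam * (real (y i) - real (a i)))"
    by (simp add: sum_distrib_left)
  also have "\<dots> < (\<Sum>i\<in>I. \<phi> i (y i) - \<phi> i (a i))"
  proof (rule sum_strict_mono_ex1[OF assms(1)])
    have strict: "lam * (real (y i) - real (a i)) < \<phi> i (y i) - \<phi> i (a i)"
      if "i \<in> I" "y i \<noteq> a i" for i
      using that assms by (intro fdiff_supporting_line[where d = "d i"]) auto
    then show "\<forall>i\<in>I. lam * (real (y i) - real (a i)) \<le> \<phi> i (y i) - \<phi> i (a i)"
      by (metis order.strict_implies_order order_refl diff_self mult_zero_right)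
    show "\<exists>i\<in>I. lam * (real (y i) - real (a i)) < \<phi> i (y i) - \<phi> i (a i)"
      using i0 strict by blast
  qed
  also have "\<dots> \<le> 0"
    using assms(9) by (simp add: sum_subtractf)
  finally show False by simp
qed

lemma inverse_power2_diff:
  fixes A B :: real
  assumes "A \<noteq> 0" "B \<noteq> 0"
  shows "1 / B^2 - 1 / A^2 = (A - B) * (A + B) / (A * B)^2"
  using assms by (simp add: field_simps power2_eq_square)

lemma fdiff_end_cost:
  assumes "1 \<le> j"
  shows "fdiff end_cost j = - (8 * real j) / ((2 * real j - 1) * (2 * real j + 1))^2"
proof -
  have "fdiff end_cost j = 1 / (2 * real j + 1)^2 - 1 / (2 * real j - 1)^2"
    by (simp add: fdiff_def end_cost_def algebra_simps)
  also have "\<dots> = ((2 * real j - 1) - (2 * real j + 1)) * ((2 * real j - 1) + (2 * real j + 1))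
      / ((2 * real j - 1) * (2 * real j + 1))^2"
    using assms by (intro inverse_power2_diff) auto
  finally show ?thesis by (simp add: algebra_simps)
qed

lemma fdiff_inner_cost:
  assumes "2 \<le> j"
  shows "fdiff inner_cost j = - (4 * (2 * real j - 1)) / ((2 * real j - 2) * (2 * real j))^2"
proof -
  have "fdiff inner_cost j = 1 / (2 * real j)^2 - 1 / (2 * real j - 2)^2"
    by (simp add: fdiff_def inner_cost_def algebra_simps)
  also have "\<dots> = ((2 * real j - 2) - 2 * real j) * ((2 * real j - 2) + 2 * real j)
      / ((2 * real j - 2) * (2 * real j))^2"
    using assms by (intro inverse_power2_diff) auto
  finally show ?thesis by (simp add: algebra_simps)
qed

lemma neg_divide_less_by_poly:
  fixes t :: real
  assumes "a * d - c * b = p + t * (q + t * (r + t * (s + t * u)))"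
    and "0 \<le> t" "0 < b" "0 < d" "0 < p" "0 \<le> q" "0 \<le> r" "0 \<le> s" "0 \<le> u"
  shows "- a / b < - c / d"
proof -
  have "0 < a * d - c * b"
    unfolding assms(1) using assms(2,5-) by (intro add_pos_nonneg mult_nonneg_nonneg add_nonneg_nonneg) auto
  then show ?thesis using assms(3,4) by (simp add: divide_less_eq less_divide_eq field_simps)
qed

lemma fdiff_end_cost_neg: "1 \<le> j \<Longrightarrow> fdiff end_cost j < 0"
  by (simp add: fdiff_end_cost)

lemma end_cost_convex:
  assumes "1 \<le> j"
  shows "fdiff end_cost j < fdiff end_cost (Suc j)"
proof -
  define t where "t = real j - 1"
  have "- (8 * (t + 1)) / ((2 * t + 1) * (2 * t + 3))^2 < - (8 * (t + 2)) / ((2 * t + 3) * (2 * t + 5))^2"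
    by (rule neg_divide_less_by_poly[where p = 1656 and q = 4800 and r = 5056 and s = 2304 and u = 384 and t = t],
        algebra) (use assms in \<open>auto simp: t_def\<close>)
  then show ?thesis using assms by (simp add: fdiff_end_cost t_def algebra_simps)
qed

lemma inner_cost_convex:
  assumes "2 \<le> j"
  shows "fdiff inner_cost j < fdiff inner_cost (Suc j)"
proof -
  define t where "t = real j - 2"
  have "- (4 * (2 * t + 3)) / ((2 * t + 2) * (2 * t + 4))^2 < - (4 * (2 * t + 5)) / ((2 * t + 4) * (2 * t + 6))^2"
    by (rule neg_divide_less_by_poly[where p = 5632 and q = 11776 and r = 9088 and s = 3072 and u = 384 and t = t],
        algebra) (use assms in \<open>auto simp: t_def\<close>)
  then show ?thesis using assms by (simp add: fdiff_inner_cost t_def algebra_simps)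
qed

(* Ordered by increasing forward difference, i.e. decreasing gain, further points go to the right,
   left, right and middle block, periodically. The polynomials are the numerators of the
   differences of the closed forms of fdiff. *)
lemma marginal_chain:
  fixes x :: nat
  shows "8 * fdiff end_cost (2 * x + 1) < fdiff end_cost (x + 1)"
    and "fdiff end_cost (x + 1) < 8 * fdiff end_cost (2 * x + 2)"
    and "8 * fdiff end_cost (2 * x + 2) < fdiff inner_cost (x + 2)"
    and "fdiff inner_cost (x + 2) < 8 * fdiff end_cost (2 * x + 3)"
proof -
  define t where "t = real x"
  have t: "0 \<le> t" by (simp add: t_def)
  have "- (64 * (2 * t + 1)) / ((4 * t + 1) * (4 * t + 3))^2 < - (8 * (t + 1)) / ((2 * t + 1) * (2 * t + 3))^2"
    by (rule neg_divide_less_by_poly[where p = 504 and q = 3384 and r = 8192 and s = 8448 and u = 3072 and t = t],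
        algebra) (use t in auto)
  then show "8 * fdiff end_cost (2 * x + 1) < fdiff end_cost (x + 1)"
    by (simp add: fdiff_end_cost t_def algebra_simps)
  have "- (8 * (t + 1)) / ((2 * t + 1) * (2 * t + 3))^2 < - (64 * (2 * t + 2)) / ((4 * t + 3) * (4 * t + 5))^2"
    by (rule neg_divide_less_by_poly[where p = 648 and q = 2184 and r = 2304 and s = 768 and u = 0 and t = t],
        algebra) (use t in auto)
  then show "fdiff end_cost (x + 1) < 8 * fdiff end_cost (2 * x + 2)"
    by (simp add: fdiff_end_cost t_def algebra_simps)
  have "- (64 * (2 * t + 2)) / ((4 * t + 3) * (4 * t + 5))^2 < - (4 * (2 * t + 3)) / ((2 * t + 2) * (2 * t + 4))^2"
    by (rule neg_divide_less_by_poly[where p = 5492 and q = 19448 and r = 25472 and s = 14592 and u = 3072 and t = t],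
        algebra) (use t in auto)
  then show "8 * fdiff end_cost (2 * x + 2) < fdiff inner_cost (x + 2)"
    by (simp add: fdiff_end_cost fdiff_inner_cost t_def algebra_simps)
  have "- (4 * (2 * t + 3)) / ((2 * t + 2) * (2 * t + 4))^2 < - (64 * (2 * t + 3)) / ((4 * t + 5) * (4 * t + 7))^2"
    by (rule neg_divide_less_by_poly[where p = 2412 and q = 5064 and r = 3456 and s = 768 and u = 0 and t = t],
        algebra) (use t in auto)
  then show "fdiff inner_cost (x + 2) < 8 * fdiff end_cost (2 * x + 3)"
    by (simp add: fdiff_end_cost fdiff_inner_cost t_def algebra_simps)
qed

(* 192 times the error bound of k, l, m points in [0,1/4], [1/4,1/2], [1/2,1]: (1/4)^3/3 = 1/192,
   and the right block is twice as long. *)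
definition cost :: "nat \<Rightarrow> nat \<Rightarrow> nat \<Rightarrow> real" where
  "cost k l m = end_cost k + inner_cost l + 8 * end_cost m"

definition marginals_separated :: "nat \<Rightarrow> nat \<Rightarrow> nat \<Rightarrow> bool" where
  "marginals_separated a1 a2 a3 \<longleftrightarrow>
     max (fdiff end_cost (a1 - 1)) (max (fdiff inner_cost (a2 - 1)) (8 * fdiff end_cost (a3 - 1)))
     < min (fdiff end_cost a1) (min (fdiff inner_cost a2) (8 * fdiff end_cost a3))"

lemma greedy_counts_separated:
  fixes x :: nat
  shows "marginals_separated (x + 2) (x + 3) (2 * x + 3)"
    and "marginals_separated (x + 2) (x + 3) (2 * x + 4)"
    and "marginals_separated (x + 3) (x + 3) (2 * x + 4)"
    and "marginals_separated (x + 3) (x + 3) (2 * x + 5)"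
proof -
  have shift: "x + 1 + 1 = x + 2" "x + 1 + 2 = x + 3" "x + 2 + 1 = x + 3"
    "2 * (x + 1) + 1 = 2 * x + 3" "2 * (x + 1) + 2 = 2 * x + 4" "2 * (x + 1) + 3 = 2 * x + 5"
    "2 * (x + 2) + 1 = 2 * x + 5"
    by simp_all
  have pred: "x + 2 - 1 = x + 1" "x + 3 - 1 = x + 2"
    "2 * x + 3 - 1 = 2 * x + 2" "2 * x + 4 - 1 = 2 * x + 3" "2 * x + 5 - 1 = 2 * x + 4"
    by simp_all
  note chain = marginal_chain[of x] marginal_chain[of "x + 1", unfolded shift]
    marginal_chain(1)[of "x + 2", unfolded shift]
  show "marginals_separated (x + 2) (x + 3) (2 * x + 3)"
    and "marginals_separated (x + 2) (x + 3) (2 * x + 4)"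
    and "marginals_separated (x + 3) (x + 3) (2 * x + 4)"
    and "marginals_separated (x + 3) (x + 3) (2 * x + 5)"
    unfolding marginals_separated_def pred max_less_iff_conj min_less_iff_conj
    using chain by (intro conjI; linarith)+
qed

lemma fdiff_cmult: "fdiff (\<lambda>j. c * \<phi> j) j = c * fdiff \<phi> j"
  by (simp add: fdiff_def algebra_simps)

lemma cost_unique_min:
  assumes a: "2 \<le> a1" "3 \<le> a2" "2 \<le> a3" "marginals_separated a1 a2 a3"
    and y: "1 \<le> y1" "2 \<le> y2" "1 \<le> y3" "y1 + y2 + y3 \<le> a1 + a2 + a3"
    and le: "cost y1 y2 y3 \<le> cost a1 a2 a3"
  shows "y1 = a1 \<and> y2 = a2 \<and> y3 = a3"
proof -
  define lo where "lo = max (fdiff end_cost (a1 - 1)) (max (fdiff inner_cost (a2 - 1)) (8 * fdiff end_cost (a3 - 1)))"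
  define hi where "hi = min (fdiff end_cost a1) (min (fdiff inner_cost a2) (8 * fdiff end_cost a3))"
  define lam where "lam = (lo + hi) / 2"
  have "lo < hi" using a(4) by (simp add: lo_def hi_def marginals_separated_def)
  moreover have "hi < 0" using fdiff_end_cost_neg[of a1] a(1) by (simp add: hi_def)
  ultimately have lam: "lo < lam" "lam < hi" "lam \<le> 0" by (simp_all add: lam_def)
  define \<phi> where "\<phi> = (\<lambda>i::nat. [end_cost, inner_cost, \<lambda>j. 8 * end_cost j] ! i)"
  define A where "A = (\<lambda>i::nat. [a1, a2, a3] ! i)"
  define Y where "Y = (\<lambda>i::nat. [y1, y2, y3] ! i)"
  define D where "D = (\<lambda>i::nat. [1, 2, 1 :: nat] ! i)"
  have "\<forall>i\<in>{0, 1, 2}. Y i = A i"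
  proof (rule separable_convex_unique_min[where \<phi> = \<phi> and d = D and lam = lam])
    show "fdiff (\<phi> i) j \<le> fdiff (\<phi> i) (Suc j)" if "i \<in> {0, 1, 2}" "D i \<le> j" for i j
      using that end_cost_convex[of j] inner_cost_convex[of j]
      by (auto simp: \<phi>_def D_def fdiff_cmult)
    show "fdiff (\<phi> i) (A i - 1) < lam" "lam < fdiff (\<phi> i) (A i)" if "i \<in> {0, 1, 2}" for i
      using that lam by (auto simp: \<phi>_def A_def lo_def hi_def fdiff_cmult)
  qed (use a y le lam in \<open>auto simp: \<phi>_def A_def Y_def D_def cost_def\<close>)
  then show ?thesis by (simp add: A_def Y_def)
qed

section \<open>Optimal configurations for the uniform distribution\<close>

lemma distortion_unif01_nonneg: "finite G \<Longrightarrow> G \<noteq> {} \<Longrightarrow> 0 \<le> distortion unif01 G"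
  by (simp add: distortion_unif01 integral_nonneg integrable_min_sqdist min_sqdist_nonneg)

lemma distortion_unif01_split:
  assumes "finite G" "G \<noteq> {}"
  shows "distortion unif01 G = integral {0..1/4} (min_sqdist G) + integral {1/4..1/2} (min_sqdist G)
      + integral {1/2..1} (min_sqdist G)"
proof -
  have "integral {1/4..1/2} (min_sqdist G) + integral {1/2..1} (min_sqdist G) = integral {1/4..1} (min_sqdist G)"
    using assms by (intro integral_min_sqdist_combine) auto
  moreover have "integral {0..1/4} (min_sqdist G) + integral {1/4..1} (min_sqdist G) = integral {0..1} (min_sqdist G)"
    using assms by (intro integral_min_sqdist_combine) auto
  ultimately show ?thesis using distortion_unif01[OF assms] by simp
qed

lemma grid_distortion_le_cost:
  assumes "finite G" "1 \<le> k" "2 \<le> l" "1 \<le> m" "0 \<le> h1" "0 \<le> h2" "0 \<le> h3"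
    and "(2 * real k - 1) * h1 = 1/4" "(real l - 1) * h2 = 1/4" "(2 * real m - 1) * h3 = 1/2"
    and "(\<lambda>i. (2 * real i + 1) * h1) ` {..<k} \<subseteq> G" "(\<lambda>i. 1/4 + real i * h2) ` {..<l} \<subseteq> G"
      "(\<lambda>i. 1 - (2 * real i + 1) * h3) ` {..<m} \<subseteq> G"
  shows "192 * distortion unif01 G \<le> cost k l m"
proof -
  have "(0::nat) \<in> {..<l}" using assms(3) by simp
  then have "1/4 + real 0 * h2 \<in> G" using assms(12) by blast
  then have G: "G \<noteq> {}" by auto
  have "integral {0..1/4} (min_sqdist G) \<le> (1/4 - 0)^3 / 3 * end_cost k"
    using assms by (intro integral_min_sqdist_le_end_grid[of _ h1]) auto
  moreover have "integral {1/4..1/2} (min_sqdist G) \<le> (1/2 - 1/4)^3 / 3 * inner_cost l"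
    using assms by (intro integral_min_sqdist_le_inner_grid[of _ h2]) auto
  moreover have "integral {1/2..1} (min_sqdist G) \<le> (1 - 1/2)^3 / 3 * end_cost m"
    using assms by (intro integral_min_sqdist_le_end_grid_right[of _ h3]) auto
  ultimately show ?thesis
    unfolding distortion_unif01_split[OF assms(1) G] cost_def by (simp add: power_divide)
qed

lemma grid_configuration_cost:
  assumes "1 \<le> k" "2 \<le> l" "1 \<le> m"
  shows "\<exists>\<alpha>. finite \<alpha> \<and> card \<alpha> \<le> k + l + m - 4 \<and>
           192 * distortion unif01 (\<alpha> \<union> {1/4, 1/2}) \<le> cost k l m"
proof -
  define h1 where "h1 = 1 / (4 * (2 * real k - 1))"
  define h2 where "h2 = 1 / (4 * (real l - 1))"
  define h3 where "h3 = 1 / (2 * (2 * real m - 1))"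
  define L where "L = (\<lambda>i. (2 * real i + 1) * h1) ` {..<k}"
  define M where "M = (\<lambda>i. 1/4 + real i * h2) ` {..<l}"
  define R where "R = (\<lambda>i. 1 - (2 * real i + 1) * h3) ` {..<m}"
  have h: "0 \<le> h1" "0 \<le> h2" "0 \<le> h3"
    "(2 * real k - 1) * h1 = 1/4" "(real l - 1) * h2 = 1/4" "(2 * real m - 1) * h3 = 1/2"
    using assms by (simp_all add: h1_def h2_def h3_def)
  have "(2 * real (k - 1) + 1) * h1 = 1/4" "1/4 + real (l - 1) * h2 = 1/2"
    "1 - (2 * real (m - 1) + 1) * h3 = 1/2"
    using assms h(4-6) by (simp_all add: of_nat_diff algebra_simps)
  then have "1/4 \<in> L" "1/4 \<in> M" "1/2 \<in> M" "1/2 \<in> R"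
    unfolding L_def M_def R_def using assms
    by (intro image_eqI[where x = "k - 1"] image_eqI[where x = 0] image_eqI[where x = "l - 1"]
        image_eqI[where x = "m - 1"]; simp)+
  then have "1/4 \<in> L \<inter> M" "1/2 \<in> (L \<union> M) \<inter> R" by auto
  then have "card (L \<inter> M) \<ge> 1" "card ((L \<union> M) \<inter> R) \<ge> 1"
    by (auto simp: L_def M_def R_def Suc_le_eq card_gt_0_iff)
  moreover have "card L \<le> k" "card M \<le> l" "card R \<le> m"
    unfolding L_def M_def R_def by (auto intro: card_image_le[THEN order_trans])
  ultimately have "card (L \<union> M \<union> R) + 2 \<le> k + l + m"
    using card_Un_Int[of L M] card_Un_Int[of "L \<union> M" R] by (simp add: L_def M_def R_def)
  moreover have "{1/4, 1/2} \<subseteq> L \<union> M \<union> R"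
    using \<open>1/4 \<in> L \<inter> M\<close> \<open>1/2 \<in> (L \<union> M) \<inter> R\<close> by auto
  then have "card ((L \<union> M \<union> R) - {1/4, 1/2}) = card (L \<union> M \<union> R) - 2"
    "((L \<union> M \<union> R) - {1/4, 1/2}) \<union> {1/4, 1/2} = L \<union> M \<union> R"
    by (auto simp: card_Diff_subset)
  moreover have "192 * distortion unif01 (L \<union> M \<union> R) \<le> cost k l m"
    using assms h by (intro grid_distortion_le_cost) (auto simp: L_def M_def R_def)
  ultimately show ?thesis
    by (intro exI[of _ "(L \<union> M \<union> R) - {1/4, 1/2}"]) (auto simp: L_def M_def R_def)
qed

lemma cond_qerror_le_cost:
  assumes "a1 + a2 + a3 = n + 2" "1 \<le> a1" "2 \<le> a2" "1 \<le> a3"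
  shows "192 * cond_qerror unif01 {1/4, 1/2} n \<le> cost a1 a2 a3"
proof -
  define \<beta> :: "real set" where "\<beta> = {1/4, 1/2}"
  obtain \<alpha> where \<alpha>: "finite \<alpha>" "card \<alpha> \<le> a1 + a2 + a3 - 4"
    and cost: "192 * distortion unif01 (\<alpha> \<union> \<beta>) \<le> cost a1 a2 a3"
    using grid_configuration_cost[OF assms(2-4)] unfolding \<beta>_def by blast
  have "cond_qerror unif01 \<beta> n \<le> distortion unif01 (\<alpha> \<union> \<beta>)"
    unfolding cond_qerror_def
  proof (rule cInf_lower)
    show "distortion unif01 (\<alpha> \<union> \<beta>) \<in> {distortion unif01 (\<alpha> \<union> \<beta>) |\<alpha>. finite \<alpha> \<and> card \<alpha> \<le> n - card \<beta>}"
      using \<alpha> assms(1) by (auto simp: \<beta>_def)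
    show "bdd_below {distortion unif01 (\<alpha> \<union> \<beta>) |\<alpha>. finite \<alpha> \<and> card \<alpha> \<le> n - card \<beta>}"
      by (rule bdd_belowI[of _ 0]) (auto intro!: distortion_unif01_nonneg simp: \<beta>_def)
  qed
  then show ?thesis using cost by (simp add: \<beta>_def)
qed

lemma cost_le_distortion:
  fixes G :: "real set"
  assumes "finite G" "1/4 \<in> G" "1/2 \<in> G"
  defines "k \<equiv> card (G \<inter> {0..1/4}) + (if G \<inter> {..<0} = {} then 0 else 1)"
    and "l \<equiv> card (G \<inter> {1/4..1/2})"
    and "m \<equiv> card (G \<inter> {1/2..1}) + (if G \<inter> {1<..} = {} then 0 else 1)"
  shows "cost k l m \<le> 192 * distortion unif01 G"
    and "G \<inter> {..<0} \<noteq> {} \<or> G \<inter> {1<..} \<noteq> {} \<Longrightarrow> cost k l m < 192 * distortion unif01 G"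
proof -
  define L where "L = integral {0..1/4} (min_sqdist G)"
  define R where "R = integral {1/2..1} (min_sqdist G)"
  have left: "end_cost k / 192 \<le> L \<and> (G \<inter> {..<0} \<noteq> {} \<longrightarrow> end_cost k / 192 < L)"
  proof (cases "G \<inter> {..<0} = {}")
    case True
    then show ?thesis using integral_min_sqdist_ge_end[of G "1/4" 0] assms(1,2)
      by (simp add: k_def L_def power_divide)
  next
    case False
    then show ?thesis using integral_min_sqdist_gt_end[of G "1/4" 0] assms(1,2)
      by (simp add: k_def L_def power_divide)
  qed
  have right: "8 * end_cost m / 192 \<le> R \<and> (G \<inter> {1<..} \<noteq> {} \<longrightarrow> 8 * end_cost m / 192 < R)"
  proof (cases "G \<inter> {1<..} = {}")
    case True
    then show ?thesis using integral_min_sqdist_ge_end_right[of G "1/2" 1] assms(1,3)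
      by (simp add: m_def R_def power_divide)
  next
    case False
    then show ?thesis using integral_min_sqdist_gt_end_right[of G "1/2" 1] assms(1,3)
      by (simp add: m_def R_def power_divide)
  qed
  have "inner_cost l / 192 \<le> integral {1/4..1/2} (min_sqdist G)"
    using integral_min_sqdist_ge_inner[of G "1/4" "1/2"] assms(1-3) by (simp add: l_def power_divide)
  moreover have "distortion unif01 G = L + integral {1/4..1/2} (min_sqdist G) + R"
    using assms(1,2) distortion_unif01_split[of G] by (auto simp: L_def R_def)
  ultimately show "cost k l m \<le> 192 * distortion unif01 G"
    and "G \<inter> {..<0} \<noteq> {} \<or> G \<inter> {1<..} \<noteq> {} \<Longrightarrow> cost k l m < 192 * distortion unif01 G"
    using left right by (auto simp: cost_def)
qed

lemma card_blocks_le: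
  fixes G :: "real set"
  assumes "finite G" "1/4 \<in> G" "1/2 \<in> G"
  shows "card (G \<inter> {0..1/4}) + (if G \<inter> {..<0} = {} then 0 else 1) + card (G \<inter> {1/4..1/2})
      + card (G \<inter> {1/2..1}) + (if G \<inter> {1<..} = {} then 0 else 1) \<le> card G + 2"
proof -
  define B where "B = [G \<inter> {..<0}, G \<inter> {0..<1/4}, G \<inter> {1/4..<1/2}, G \<inter> {1/2..1}, G \<inter> {1<..}]"
  have "(\<Sum>A\<leftarrow>B. card A) = card (\<Union> (set B))"
    unfolding B_def using assms(1) by (simp add: card_Un_disjoint disjoint_iff)
  also have "\<dots> \<le> card G" using assms(1) by (intro card_mono) (auto simp: B_def)
  finally have partition: "(\<Sum>A\<leftarrow>B. card A) \<le> card G" .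
  have "G \<inter> {0..1/4} = insert (1/4) (G \<inter> {0..<1/4})" "G \<inter> {1/4..1/2} = insert (1/2) (G \<inter> {1/4..<1/2})"
    using assms by auto
  then have "card (G \<inter> {0..1/4}) = card (G \<inter> {0..<1/4}) + 1" "card (G \<inter> {1/4..1/2}) = card (G \<inter> {1/4..<1/2}) + 1"
    using assms(1) by simp_all
  moreover have nonempty: "(if A = {} then 0 else 1) \<le> card A" if "A \<subseteq> G" for A
    using assms(1) that by (auto simp: card_gt_0_iff finite_subset Suc_le_eq)
  moreover have "card (G \<inter> {..<0}) + card (G \<inter> {0..<1/4}) + card (G \<inter> {1/4..<1/2})
      + card (G \<inter> {1/2..1}) + card (G \<inter> {1<..}) \<le> card G"
    using partition by (simp add: B_def)
  ultimately show ?thesis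
    using nonempty[of "G \<inter> {..<0}", OF Int_lower1] nonempty[of "G \<inter> {1<..}", OF Int_lower1]
    by linarith
qed

lemma cond_optimal_set_card_le:
  assumes "cond_optimal_set P \<beta> n G" "finite \<beta>" "card \<beta> \<le> n"
  shows "finite G" "\<beta> \<subseteq> G" "card G \<le> n"
proof -
  obtain \<alpha> where \<alpha>: "finite \<alpha>" "card \<alpha> \<le> n - card \<beta>" "G = \<alpha> \<union> \<beta>"
    using assms(1) unfolding cond_optimal_set_def by blast
  then show "finite G" "\<beta> \<subseteq> G" using assms(2) by auto
  have "card G \<le> card \<alpha> + card \<beta>" unfolding \<alpha>(3) by (rule card_Un_le)
  then show "card G \<le> n" using \<alpha>(2) assms(3) by linarith
qed

lemma cond_optimal_counts:
  assumes opt: "cond_optimal_set unif01 {1/4, 1/2} n G"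
    and a: "a1 + a2 + a3 = n + 2" "2 \<le> a1" "3 \<le> a2" "2 \<le> a3" "marginals_separated a1 a2 a3"
  shows "card (G \<inter> {0..1/4}) = a1 \<and> card (G \<inter> {1/4..1/2}) = a2 \<and> card (G \<inter> {1/2..1}) = a3"
proof -
  have G: "finite G" "1/4 \<in> G" "1/2 \<in> G" "card G \<le> n"
    using cond_optimal_set_card_le[OF opt] a(1-4) by auto
  define escape where "escape = (G \<inter> {..<0} \<noteq> {} \<or> G \<inter> {1<..} \<noteq> {})"
  define k where "k = card (G \<inter> {0..1/4}) + (if G \<inter> {..<0} = {} then 0 else 1)"
  define l where "l = card (G \<inter> {1/4..1/2})"
  define m where "m = card (G \<inter> {1/2..1}) + (if G \<inter> {1<..} = {} then 0 else 1)"
  have upper: "192 * distortion unif01 G \<le> cost a1 a2 a3"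
    using opt cond_qerror_le_cost[OF a(1)] a(2-4) unfolding cond_optimal_set_def by auto
  note lower = cost_le_distortion[OF G(1-3), folded k_def l_def m_def escape_def]
  have "card {1/4::real} \<le> card (G \<inter> {0..1/4})" "card {1/4, 1/2::real} \<le> l"
    "card {1/2::real} \<le> card (G \<inter> {1/2..1})"
    unfolding l_def using G by (intro card_mono; auto)+
  then have "k = a1 \<and> l = a2 \<and> m = a3"
    using card_blocks_le[OF G(1-3)] G(4) a lower(1) upper
    by (intro cost_unique_min) (auto simp: k_def l_def m_def)
  moreover from this have "\<not> escape" using lower(2) upper by auto
  ultimately show ?thesis by (simp add: k_def l_def m_def escape_def)
qed

theorem theorem3p8:
  fixes n :: nat and \<alpha>n :: "real set"
  assumes "n \<ge> 6"
    and "cond_optimal_set unif01 {1/4, 1/2} n \<alpha>n"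
  defines "k \<equiv> card (\<alpha>n \<inter> {0..1/4})"
    and "l \<equiv> card (\<alpha>n \<inter> {1/4..1/2})"
    and "m \<equiv> card (\<alpha>n \<inter> {1/2..1})"
  shows "(\<forall>x::nat. n = 4*x + 2 \<longrightarrow> (k, l, m) = (x + 1, x + 2, 2*x + 1)) \<and>
         (\<forall>x::nat. n = 4*x + 3 \<longrightarrow> (k, l, m) = (x + 1, x + 2, 2*x + 2)) \<and>
         (\<forall>x::nat. n = 4*x + 4 \<longrightarrow> (k, l, m) = (x + 2, x + 2, 2*x + 2)) \<and>
         (\<forall>x::nat. n = 4*x + 5 \<longrightarrow> (k, l, m) = (x + 2, x + 2, 2*x + 3))"
proof (intro conjI allI impI)
  note counts = cond_optimal_counts[OF assms(2), folded k_def l_def m_def]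
  fix x :: nat
  define t where "t = x - 1"
  have x: "x = t + 1" if "n \<le> 4 * x + 5"
    using that assms(1) unfolding t_def by arith
  show "(k, l, m) = (x + 1, x + 2, 2*x + 1)" if "n = 4*x + 2"
    using counts[of "t + 2" "t + 3" "2 * t + 3"] greedy_counts_separated(1)[of t] that x by auto
  show "(k, l, m) = (x + 1, x + 2, 2*x + 2)" if "n = 4*x + 3"
    using counts[of "t + 2" "t + 3" "2 * t + 4"] greedy_counts_separated(2)[of t] that x by auto
  show "(k, l, m) = (x + 2, x + 2, 2*x + 2)" if "n = 4*x + 4"
    using counts[of "t + 3" "t + 3" "2 * t + 4"] greedy_counts_separated(3)[of t] that x by auto
  show "(k, l, m) = (x + 2, x + 2, 2*x + 3)" if "n = 4*x + 5"
    using counts[of "t + 3" "t + 3" "2 * t + 5"] greedy_counts_separated(4)[of t] that x by auto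
qed

end
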